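(* For $\alpha>0$ let $\mathcal{C}_\alpha=X_\alpha(\mathbb{R}^2)$ be as in the context. Then the curve $\mathcal{C}_\alpha\cap\{x_2=0\}$ converges uniformly to the origin as $\alpha\to+\infty$: $$\sup\{|x_1|+|x_3| : (x_1,0,x_3)\in\mathcal{C}_\alpha\}\to0\quad\text{as }\alpha\to+\infty.$$
   Context: $\mathrm{Nil}_3$ is $\mathbb{R}^3$ with the metric $dx_1^2+dx_2^2+\big(dx_3+\tfrac12(x_2dx_1-x_1dx_2)\big)^2$. For $\alpha>0$ and $\theta\in\mathbb{R}$ set $C_{\alpha,\theta}=\frac{\sin(2\theta)}{2\alpha}$ and $P_{\alpha,\theta}(x)=\alpha^2+\cos(2\theta)x^2-C_{\alpha,\theta}^2x^4$. Let $\theta^+_\alpha=\pi/2$ if $\alpha>1$, and $\theta^+_\alpha=\frac12\arccos(1-2\alpha^2)$ if $\alpha\le1$. Let $$L(\alpha,\theta)=\int_{-1}^1\frac{2\alpha C_{\alpha,\theta}^2x^2-\alpha\cos(2\theta)+C_{\alpha,\theta}^2x^2\sqrt{P_{\alpha,\theta}(x)}}{\sqrt{(1-x^2)P_{\alpha,\theta}(x)}(\alpha+\sqrt{P_{\alpha,\theta}(x)})}dx.$$ Let $\theta=\tilde\theta_\alpha$ be the unique $\theta\in(0,\theta^+_\alpha)\cap(0,\pi/4)$ with $L(\alpha,\theta)=0$, and $C=C_{\alpha,\theta}$. Let $\varphi$ solve $\varphi'^2=P_{\alpha,\theta}(\cos\varphi)$ with $\varphi(0)=0$ and $\varphi'(0)\le0$.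 Define $\beta'=C\cos^2\varphi$ with $\beta(0)=0$, and $G'=\frac{C^2\cos^2\varphi-\cos 2\theta}{\alpha-\varphi'}$ with $G(0)=0$. Put $A=\alpha v+\beta(u)$ and $X_\alpha(u,v)=(x_1,x_2,x_3)$ with $x_1=\frac{G'}{\alpha}\cos\varphi\sinh A-\frac C\alpha\sin\varphi\cosh A$, $x_2=Cv-G$, $x_3=-\frac{x_1x_2}2+\frac C\alpha(\frac{G'}{\alpha}-1)\cos\varphi\cosh A-\frac1\alpha(\frac{C^2}\alpha+G')\sin\varphi\sinh A$, where $\varphi,G,G'$ are evaluated at $u$. *)

theory Defs
  imports "HOL-Analysis.Analysis"
begin

definition Cc :: "real \<Rightarrow> real \<Rightarrow> real" where
  "Cc \<alpha> \<theta> = sin (2*\<theta>) / (2*\<alpha>)"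

definition Pp :: "real \<Rightarrow> real \<Rightarrow> real \<Rightarrow> real" where
  "Pp \<alpha> \<theta> x = \<alpha>^2 + cos (2*\<theta>) * x^2 - (Cc \<alpha> \<theta>)^2 * x^4"

definition theta_plus :: "real \<Rightarrow> real" where
  "theta_plus \<alpha> = (if \<alpha> > 1 then pi/2 else arccos (1 - 2*\<alpha>^2) / 2)"

definition Lint :: "real \<Rightarrow> real \<Rightarrow> real" where
  "Lint \<alpha> \<theta> = integral {-1..1} (\<lambda>x.
     (2*\<alpha>*(Cc \<alpha> \<theta>)^2*x^2 - \<alpha>*cos (2*\<theta>) + (Cc \<alpha> \<theta>)^2*x^2 * (sqrt (Pp \<alpha> \<theta> x)))
     / (sqrt ((1 - x^2) * Pp \<alpha> \<theta> x) * (\<alpha> + sqrt (Pp \<alpha> \<theta> x))))"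

definition theta_tilde :: "real \<Rightarrow> real" where
  "theta_tilde \<alpha> = (THE \<theta>. 0 < \<theta> \<and> \<theta> < theta_plus \<alpha> \<and> \<theta> < pi/4 \<and> Lint \<alpha> \<theta> = 0)"

definition Ct :: "real \<Rightarrow> real" where
  "Ct \<alpha> = Cc \<alpha> (theta_tilde \<alpha>)"

definition phi :: "real \<Rightarrow> real \<Rightarrow> real" where
  "phi \<alpha> = (THE f. \<exists>f'. f 0 = 0 \<and> f' 0 \<le> 0 \<and>
       (\<forall>u. (f has_real_derivative f' u) (at u)) \<and>
       (\<forall>u. (f' u)^2 = Pp \<alpha> (theta_tilde \<alpha>) (cos (f u))))"

definition dphi :: "real \<Rightarrow> real \<Rightarrow> real" where
  "dphi \<alpha> u = deriv (phi \<alpha>) u"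

definition prim :: "(real \<Rightarrow> real) \<Rightarrow> real \<Rightarrow> real" where
  "prim g = (THE F. F 0 = 0 \<and> (\<forall>u. (F has_real_derivative g u) (at u)))"

definition beta :: "real \<Rightarrow> real \<Rightarrow> real" where
  "beta \<alpha> = prim (\<lambda>u. Ct \<alpha> * (cos (phi \<alpha> u))^2)"

definition dG :: "real \<Rightarrow> real \<Rightarrow> real" where
  "dG \<alpha> u = ((Ct \<alpha>)^2 * (cos (phi \<alpha> u))^2 - cos (2 * theta_tilde \<alpha>)) / (\<alpha> - dphi \<alpha> u)"

definition G :: "real \<Rightarrow> real \<Rightarrow> real" where
  "G \<alpha> = prim (dG \<alpha>)"

definition X :: "real \<Rightarrow> real \<times> real \<Rightarrow> real \<times> real \<times> real" where
  "X \<alpha> uv = (let u = fst uv; v = snd uv; C = Ct \<alpha>; A = \<alpha> * v + beta \<alpha> u;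
      ph = phi \<alpha> u; g = G \<alpha> u; g' = dG \<alpha> u;
      x1 = g'/\<alpha> * cos ph * sinh A - C/\<alpha> * sin ph * cosh A;
      x2 = C * v - g;
      x3 = - (x1 * x2) / 2 + C/\<alpha> * (g'/\<alpha> - 1) * cos ph * cosh A
           - 1/\<alpha> * (C^2/\<alpha> + g') * sin ph * sinh A
    in (x1, x2, x3))"

definition Ccal :: "real \<Rightarrow> (real \<times> real \<times> real) set" where
  "Ccal \<alpha> = range (X \<alpha>)"

end

theory Submission
  imports Defs "HOL-Real_Asymp.Real_Asymp"
begin

text \<open>
  For \<open>\<alpha> \<ge> 2\<close> the substitutions \<open>c = cos (2 \<theta>)\<close> and \<open>x = - cos t\<close> turn \<open>L(\<alpha>, \<theta>)\<close>
  into an integral over \<open>[0, \<pi>]\<close> which is strictly decreasing in \<open>c\<close>, positive at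
  \<open>c = 0\<close> and negative at \<open>c = 1/2\<close>. Hence \<open>theta_tilde\<close> is well defined with
  \<open>0 < cos (2 \<theta>) < 1/2\<close>, and \<open>C\<close> is of order \<open>1/\<alpha>\<close>. The function \<open>\<phi>\<close> is obtained
  by separation of variables from \<open>\<phi>' = - sqrt (P (cos \<phi>))\<close>, with \<open>sqrt P \<in> [\<alpha> - 1, \<alpha> + 1]\<close>.

  On the slice \<open>x\<^sub>2 = 0\<close> one has \<open>v = G / C\<close>, and the exponent \<open>A = \<alpha> v + \<beta>\<close> equals
  \<open>- R (\<phi> u)\<close>, where \<open>R\<close> is a primitive of \<open>\<rho>\<close>, the integrand of \<open>L\<close> in the variable
  \<open>t\<close> divided by \<open>C\<close>. Now \<open>\<rho>\<close> is \<open>\<pi>\<close>-periodic with mean zero (this is the equation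
  \<open>L = 0\<close>) and \<open>|\<rho>| \<le> 8\<close>, so \<open>|A| \<le> 8 \<pi>\<close> uniformly in \<open>\<alpha>\<close>. Since \<open>G'\<close> and \<open>C\<close> are
  \<open>O(1/\<alpha>)\<close>, every term of \<open>x\<^sub>1\<close> and \<open>x\<^sub>3\<close> is then \<open>O(e\<^sup>8\<^sup>\<pi> / \<alpha>\<^sup>2)\<close>.
\<close>

section \<open>Primitives and an autonomous ODE\<close>

lemma exists_antiderivative:
  fixes g :: "real \<Rightarrow> real"
  assumes "continuous_on UNIV g"
  obtains F where "F 0 = 0" "\<And>x. (F has_real_derivative g x) (at x)"
proof -
  define F where "F x = integral {0..x} g - integral {x..0} g" for x
  have int: "g integrable_on {a..b}" for a b
    by (rule integrable_continuous_real) (rule continuous_on_subset[OF assms], auto)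
  have shift: "F u = integral {a..u} g - integral {a..0} g" if "a \<le> u" "a \<le> 0" for a u
  proof (cases "0 \<le> u")
    case True
    have "integral {a..0} g + integral {0..u} g = integral {a..u} g"
      by (rule Henstock_Kurzweil_Integration.integral_combine) (use that True int in auto)
    then show ?thesis using True by (cases "u = 0") (auto simp: F_def)
  next
    case False
    have "integral {a..u} g + integral {u..0} g = integral {a..0} g"
      by (rule Henstock_Kurzweil_Integration.integral_combine) (use that False int in auto)
    then show ?thesis using False by (auto simp: F_def)
  qed
  have "(F has_real_derivative g x) (at x)" for x
  proof -
    define a where "a = min 0 x - 1"
    have "((\<lambda>u. integral {a..u} g) has_real_derivative g x) (at x within {a..x+1})"
      by (rule integral_has_real_derivative) (auto simp: a_def intro: continuous_on_subset[OF assms])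
    moreover have "at x within {a..x+1} = at x"
      by (rule at_within_Icc_at) (auto simp: a_def)
    ultimately have "((\<lambda>u. integral {a..u} g - integral {a..0} g) has_real_derivative g x) (at x)"
      by (auto intro!: derivative_eq_intros)
    then show ?thesis
      by (rule has_field_derivative_transform_within_open[of _ _ _ "{a<..}"])
         (use shift[of a] in \<open>auto simp: a_def\<close>)
  qed
  moreover have "F 0 = 0" by (simp add: F_def)
  ultimately show thesis using that by blast
qed

lemma prim_unique:
  assumes "F 0 = 0" "\<And>u. (F has_real_derivative g u) (at u)"
  shows "prim g = F"
  unfolding prim_def
proof (rule the_equality)
  fix H assume H: "H 0 = 0 \<and> (\<forall>u. (H has_real_derivative g u) (at u))"
  have "\<forall>x. ((\<lambda>u. H u - F u) has_real_derivative 0) (at x)"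
    using H assms by (auto intro!: derivative_eq_intros)
  then have "H x - F x = H 0 - F 0" for x by (rule DERIV_isconst_all)
  then show "H = F" using H assms by (auto simp: fun_eq_iff)
qed (use assms in auto)

lemma
  assumes "continuous_on UNIV g"
  shows prim_zero: "prim g 0 = 0"
    and has_real_derivative_prim: "(prim g has_real_derivative g u) (at u)"
proof -
  obtain F where "F 0 = 0" "\<And>x. (F has_real_derivative g x) (at x)"
    using exists_antiderivative[OF assms] by blast
  with prim_unique[of F g] show "prim g 0 = 0" "(prim g has_real_derivative g u) (at u)"
    by auto
qed

lemma nonzero_derivative_imp_inj:
  fixes f :: "real \<Rightarrow> real"
  assumes f: "\<And>u. (f has_real_derivative f' u) (at u)" and nz: "\<And>u. f' u \<noteq> 0"
  shows "inj f"
proof (rule injI, rule ccontr)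
  fix x y assume "f x = f y" "x \<noteq> y"
  moreover have "\<exists>z. f y - f x = (y - x) * f' z" if "x < y" for x y
    using MVT2[OF that, of f f'] f by blast
  ultimately show False
    using nz by (cases x y rule: linorder_cases) (metis mult_eq_0_iff right_minus_eq)+
qed

text \<open>An injective continuous function on \<open>\<real>\<close> is strictly monotone, and monotonicity
  fixes the sign of the derivative.\<close>

lemma nonzero_derivative_sign_constant:
  fixes f :: "real \<Rightarrow> real"
  assumes f: "\<And>u. (f has_real_derivative f' u) (at u)" and nz: "\<And>u. f' u \<noteq> 0"
    and "f' 0 < 0"
  shows "f' u < 0"
proof -
  have "continuous_on UNIV f"
    using f by (intro continuous_at_imp_continuous_on) (auto intro: DERIV_isCont)
  then have "strict_mono_on UNIV f \<or> strict_antimono_on UNIV f"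
    using injective_eq_monotone_map[of UNIV f] nonzero_derivative_imp_inj[OF f nz] by simp
  then show ?thesis
  proof
    assume "strict_mono_on UNIV f"
    moreover obtain d where "d > 0" "\<And>h. 0 < h \<Longrightarrow> h < d \<Longrightarrow> f (0 + h) < f 0"
      using DERIV_neg_dec_right[OF f \<open>f' 0 < 0\<close>] by blast
    moreover have "0 < d/2" "d/2 < d" using \<open>d > 0\<close> by auto
    ultimately show ?thesis
      by (metis add_0 monotone_on_def UNIV_I less_asym)
  next
    assume dec: "strict_antimono_on UNIV f"
    show ?thesis
    proof (rule ccontr)
      assume "\<not> f' u < 0"
      then have "0 < f' u" using nz[of u] by linarith
      then obtain d where "d > 0" "\<And>h. 0 < h \<Longrightarrow> h < d \<Longrightarrow> f u < f (u + h)"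
        using DERIV_pos_inc_right[OF f] by blast
      moreover have "0 < d/2" "d/2 < d" using \<open>d > 0\<close> by auto
      ultimately show False using dec
        by (metis monotone_on_def UNIV_I less_add_same_cancel1 less_asym)
    qed
  qed
qed

lemma derivative_eq_neg_of_square_eq:
  fixes f :: "real \<Rightarrow> real"
  assumes f: "\<And>u. (f has_real_derivative f' u) (at u)"
    and sq: "\<And>u. (f' u)^2 = (S (f u))^2" and S: "\<And>x. 0 < S x" and "f' 0 \<le> 0"
  shows "f' u = - S (f u)"
proof -
  have nz: "f' u \<noteq> 0" for u using sq[of u] S[of "f u"] by auto
  have "f' u < 0"
    by (rule nonzero_derivative_sign_constant[OF f nz]) (use \<open>f' 0 \<le> 0\<close> nz[of 0] in linarith)
  moreover have "\<bar>f' u\<bar> = S (f u)" using sq[of u] S[of "f u"] by (metis abs_of_pos power2_eq_iff_nonneg abs_ge_zero power2_abs)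
  ultimately show ?thesis by linarith
qed

lemma surj_if_derivative_ge:
  fixes U :: "real \<Rightarrow> real"
  assumes U: "\<And>x. (U has_real_derivative U' x) (at x)" and ge: "\<And>x. c \<le> U' x" and "0 < c"
  shows "surj U"
proof -
  have grow: "c * (y - x) \<le> U y - U x" if xy: "x \<le> y" for x y
  proof (cases "x = y")
    case False
    then obtain z where "U y - U x = (y - x) * U' z"
      using MVT2[of x y U U'] U xy False by (metis order_le_neq_trans)
    then show ?thesis using ge[of z] xy by (simp add: mult.commute mult_right_mono)
  qed simp
  have cont: "continuous_on S U" for S
    using U by (intro continuous_at_imp_continuous_on) (auto intro: DERIV_isCont)
  have "\<exists>t. U t = w" for w
  proof (cases "U 0 \<le> w")
    case True
    then have "w \<le> U ((w - U 0) / c)" using grow[of 0 "(w - U 0) / c"] \<open>0 < c\<close> by simp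
    then show ?thesis using IVT'[of U 0 w] True cont \<open>0 < c\<close> by fastforce
  next
    case False
    then have "U ((w - U 0) / c) \<le> w"
      using grow[of "(w - U 0) / c" 0] \<open>0 < c\<close> by (simp add: divide_nonpos_pos)
    moreover have "(w - U 0) / c \<le> 0" using False \<open>0 < c\<close> by (simp add: divide_nonpos_pos)
    ultimately show ?thesis using IVT'[of U _ w 0] False cont by fastforce
  qed
  then show ?thesis by (metis surjI)
qed

text \<open>Separation of variables: with \<open>U' = 1/S\<close>, a solution of \<open>\<phi>' = - S \<phi>\<close> satisfies
  \<open>U (\<phi> u) = U (\<phi> 0) - u\<close>.\<close>

lemma autonomous_ode_solution_unique:
  fixes S :: "real \<Rightarrow> real"
  assumes S: "continuous_on UNIV S" "\<And>x. 0 < S x"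
    and f: "\<And>u. (f has_real_derivative - S (f u)) (at u)"
    and g: "\<And>u. (g has_real_derivative - S (g u)) (at u)" and "f 0 = g 0"
  shows "f = g"
proof -
  have S0: "S x \<noteq> 0" for x using S(2)[of x] by simp
  then have "continuous_on UNIV (\<lambda>x. 1 / S x)" using S(1) by (intro continuous_intros) auto
  then obtain U where U: "\<And>x. (U has_real_derivative 1 / S x) (at x)"
    using exists_antiderivative by blast
  have "inj U" by (rule nonzero_derivative_imp_inj[OF U]) (use S0 in simp)
  have "U (h u) + u = U (h 0)"
    if h: "\<And>u. (h has_real_derivative - S (h u)) (at u)" for h u
  proof -
    have "((\<lambda>u. U (h u) + u) has_real_derivative 1 / S (h x) * - S (h x) + 1) (at x)" for x
      by (rule DERIV_add[OF DERIV_chain2[OF U h] DERIV_ident])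
    then have "\<forall>x. ((\<lambda>u. U (h u) + u) has_real_derivative 0) (at x)"
      using S0 by simp
    from DERIV_isconst_all[OF this, of u 0] show ?thesis by simp
  qed
  then have "U (f u) = U (g u)" for u using f g \<open>f 0 = g 0\<close> by (metis add_right_cancel)
  with \<open>inj U\<close> show ?thesis by (auto simp: inj_def)
qed

lemma autonomous_ode_solution_exists:
  fixes S :: "real \<Rightarrow> real"
  assumes S: "continuous_on UNIV S" "\<And>x. 0 < S x" "\<And>x. S x \<le> M"
  obtains \<phi> where "\<phi> 0 = 0" "\<And>u. (\<phi> has_real_derivative - S (\<phi> u)) (at u)"
proof -
  have S0: "S x \<noteq> 0" for x using S(2)[of x] by simp
  then have "continuous_on UNIV (\<lambda>x. 1 / S x)" using S(1) by (intro continuous_intros) auto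
  then obtain U where U0: "U 0 = 0" and U: "\<And>x. (U has_real_derivative 1 / S x) (at x)"
    using exists_antiderivative by blast
  have "0 < M" using S(2,3)[of 0] by linarith
  have "inj U" by (rule nonzero_derivative_imp_inj[OF U]) (use S0 in simp)
  moreover have "surj U"
    by (rule surj_if_derivative_ge[OF U, of "1 / M"]) (use S \<open>0 < M\<close> in \<open>auto simp: frac_le\<close>)
  ultimately have UV: "U (inv U w) = w" and VU: "inv U (U t) = t" for w t
    by (auto simp: surj_f_inv_f inv_f_f)
  have "isCont (inv U) (U (inv U w))" for w
    by (rule isCont_inverse_function[where f=U and d=1]) (use VU DERIV_isCont[OF U] in auto)
  then have "isCont (inv U) w" for w by (simp add: UV)
  then have V: "(inv U has_real_derivative S (inv U w)) (at w)" for w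
    using DERIV_inverse_function[where g="inv U" and a="w - 1" and b="w + 1", OF U] S0 UV by simp
  show thesis
  proof
    show "inv U (- 0) = 0" using VU[of 0] U0 by simp
    show "((\<lambda>u. inv U (- u)) has_real_derivative - S (inv U (- u))) (at u)" for u
      using DERIV_chain2[OF V DERIV_minus[OF DERIV_ident], of u] by simp
  qed
qed

lemma primitive_periodic:
  fixes F f :: "real \<Rightarrow> real"
  assumes F: "\<And>t. (F has_real_derivative f t) (at t)"
    and f: "\<And>t. f (t + p) = f t" and "F p = F 0"
  shows "F (t + p) = F t"
proof -
  have "((\<lambda>t. F (t + p) - F t) has_real_derivative f (x + p) - f x) (at x)" for x
    using DERIV_diff[OF DERIV_chain2[OF F DERIV_add[OF DERIV_ident DERIV_const]] F] by simp
  then have "\<forall>x. ((\<lambda>t. F (t + p) - F t) has_real_derivative 0) (at x)" using f by simp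
  from DERIV_isconst_all[OF this, of t 0] show ?thesis using \<open>F p = F 0\<close> by simp
qed

lemma periodic_abs_diff_le:
  fixes F :: "real \<Rightarrow> real"
  assumes F: "\<And>t. (F has_real_derivative f t) (at t)" and bound: "\<And>t. \<bar>f t\<bar> \<le> B"
    and periodic: "\<And>t. F (t + p) = F t" and "0 < p"
  shows "\<bar>F t - F 0\<bar> \<le> B * p"
proof -
  have nat: "F (t + real n * p) = F t" for n t
    by (induction n) (simp_all add: algebra_simps periodic[of "t + _", simplified algebra_simps])
  define k where "k = \<lfloor>t / p\<rfloor>"
  define t0 where "t0 = t - real_of_int k * p"
  have "real_of_int k \<le> t / p" "t / p < real_of_int k + 1" unfolding k_def by linarith+
  then have t0: "0 \<le> t0" "t0 < p" using \<open>0 < p\<close> by (auto simp: t0_def field_simps)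
  have "F t = F t0"
  proof (cases "0 \<le> k")
    case True
    then show ?thesis using nat[of t0 "nat k"] by (simp add: t0_def)
  next
    case False
    then show ?thesis using nat[of t "nat (- k)"] by (simp add: t0_def)
  qed
  moreover have "\<bar>F t0 - F 0\<bar> \<le> B * t0"
  proof (cases "t0 = 0")
    case False
    then obtain z where "F t0 - F 0 = (t0 - 0) * f z"
      using MVT2[of 0 t0 F f] F t0 by force
    moreover have "t0 * \<bar>f z\<bar> \<le> t0 * B" using bound[of z] t0 by (simp add: mult_left_mono)
    ultimately show ?thesis using t0 by (simp add: abs_mult mult.commute)
  qed simp
  moreover have "0 \<le> B" using bound[of 0] by linarith
  ultimately show ?thesis using t0 by (metis mult_left_mono order_trans less_imp_le)
qed

lemma abs_sinh_cosh_le_exp: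
  fixes A B :: real
  assumes "\<bar>A\<bar> \<le> B"
  shows "\<bar>sinh A\<bar> \<le> exp B" "\<bar>cosh A\<bar> \<le> exp B"
proof -
  have "exp A \<le> exp B" "exp (- A) \<le> exp B" "0 < exp A" "0 < exp (- A)" using assms by auto
  then have "\<bar>exp A - exp (- A)\<bar> \<le> 2 * exp B" "\<bar>exp A + exp (- A)\<bar> \<le> 2 * exp B"
    unfolding abs_le_iff by linarith+
  then show "\<bar>sinh A\<bar> \<le> exp B" "\<bar>cosh A\<bar> \<le> exp B"
    by (simp_all add: sinh_field_def cosh_field_def)
qed

lemma abs_mult3_le:
  fixes x y z X Y Z :: real
  assumes "\<bar>x\<bar> \<le> X" "\<bar>y\<bar> \<le> Y" "\<bar>z\<bar> \<le> Z"
  shows "\<bar>x * y * z\<bar> \<le> X * Y * Z"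
  unfolding abs_mult using assms by (intro mult_mono) (auto intro: order_trans[OF abs_ge_zero])

lemma pi_not_le_zero [simp]: "\<not> pi \<le> (0::real)"
  using pi_gt_zero by linarith

lemma cos_squared_bounds: "0 \<le> (cos t)^2" "(cos t)^2 \<le> (1::real)"
  by (simp_all add: abs_square_le_1)

section \<open>The integral defining \<open>theta_tilde\<close>\<close>

text \<open>With \<open>c = cos (2 \<theta>)\<close> and \<open>y = x\<^sup>2\<close> one has \<open>Pp \<alpha> \<theta> x = Pc \<alpha> c y\<close>, and the substitution
  \<open>x = - cos t\<close> turns \<open>Lint \<alpha> \<theta>\<close> into \<open>Lc \<alpha> c\<close>.\<close>

definition Pc :: "real \<Rightarrow> real \<Rightarrow> real \<Rightarrow> real" where
  "Pc a c y = a^2 + c*y - (1 - c^2)*y^2/(4*a^2)"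

definition Lc_integrand :: "real \<Rightarrow> real \<Rightarrow> real \<Rightarrow> real" where
  "Lc_integrand a c y = ((1 - c^2)*y*(2*a + sqrt (Pc a c y))/(4*a^2) - a*c)
     / (sqrt (Pc a c y) * (a + sqrt (Pc a c y)))"

definition Lc :: "real \<Rightarrow> real \<Rightarrow> real" where
  "Lc a c = integral {0..pi} (\<lambda>t. Lc_integrand a c ((cos t)^2))"

lemma Cc_squared: "(Cc a \<theta>)^2 = (1 - (cos (2*\<theta>))^2)/(4*a^2)"
  by (simp add: Cc_def power_divide sin_squared_eq power_mult_distrib)

lemma Pp_eq_Pc: "Pp a \<theta> x = Pc a (cos (2*\<theta>)) (x^2)"
  unfolding Pp_def Pc_def Cc_squared by (simp add: power2_eq_square power4_eq_xxxx)

lemma Pc_bounds: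
  assumes "2 \<le> a" "0 \<le> c" "c \<le> 1" "0 \<le> y" "y \<le> 1"
  shows "(a - 1)^2 \<le> Pc a c y" "Pc a c y \<le> (a + 1)^2"
proof -
  define z where "z = (1 - c^2)*y^2/(4*a^2)"
  have "(1 - c^2)*y^2 \<le> 1" "0 \<le> (1 - c^2)*y^2"
    using assms by (simp_all add: mult_le_one power_le_one)
  moreover have "16 \<le> 4*a^2" using assms power_mono[of 2 a 2] by auto
  ultimately have "0 \<le> z" "z \<le> 1" by (auto simp: z_def divide_le_eq)
  moreover have "0 \<le> c*y" "c*y \<le> 1" using assms by (auto simp: mult_le_one)
  moreover have "Pc a c y = a^2 + c*y - z" by (simp add: Pc_def z_def)
  moreover have "(a - 1)^2 = a^2 - 2*a + 1" "(a + 1)^2 = a^2 + 2*a + 1"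
    by (simp_all add: power2_diff power2_sum)
  ultimately show "(a - 1)^2 \<le> Pc a c y" "Pc a c y \<le> (a + 1)^2"
    using assms by linarith+
qed

lemma sqrt_Pc_bounds:
  assumes "2 \<le> a" "0 \<le> c" "c \<le> 1" "0 \<le> y" "y \<le> 1"
  shows "a - 1 \<le> sqrt (Pc a c y)" "sqrt (Pc a c y) \<le> a + 1" "1 \<le> sqrt (Pc a c y)"
proof -
  show lo: "a - 1 \<le> sqrt (Pc a c y)"
    using Pc_bounds(1)[OF assms] assms real_le_rsqrt by auto
  show "sqrt (Pc a c y) \<le> a + 1"
    using Pc_bounds(2)[OF assms] assms real_sqrt_le_mono[of "Pc a c y" "(a + 1)^2"] by auto
  show "1 \<le> sqrt (Pc a c y)" using lo assms(1) by linarith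
qed

lemma Pc_pos:
  assumes "2 \<le> a" "0 \<le> c" "c \<le> 1" "0 \<le> y" "y \<le> 1"
  shows "0 < Pc a c y"
  using sqrt_Pc_bounds(3)[OF assms] by (auto intro: ccontr)

lemma continuous_on_Lc_integrand_param:
  assumes "2 \<le> a"
  shows "continuous_on ({0..1} \<times> UNIV) (\<lambda>p. Lc_integrand a (fst p) ((cos (snd p))^2))"
proof -
  define s where "s p = sqrt (Pc a (fst p) ((cos (snd p))^2))" for p
  have "1 \<le> s p" if "p \<in> {0..1} \<times> UNIV" for p
    using sqrt_Pc_bounds(3)[OF assms, of "fst p" "(cos (snd p))^2"] that
    by (auto simp: s_def abs_square_le_1)
  then have "s p \<noteq> 0" "a + s p \<noteq> 0" if "p \<in> {0..1} \<times> UNIV" for p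
    using that assms by fastforce+
  moreover have "continuous_on ({0..1} \<times> UNIV) s"
    unfolding s_def Pc_def using assms by (intro continuous_intros) auto
  moreover have "Lc_integrand a (fst p) ((cos (snd p))^2)
      = ((1 - (fst p)^2)*(cos (snd p))^2*(2*a + s p)/(4*a^2) - a*fst p) / (s p * (a + s p))" for p
    by (simp add: Lc_integrand_def s_def)
  ultimately show ?thesis
    using assms by (auto intro!: continuous_intros)
qed

lemma continuous_on_Lc_integrand:
  assumes "2 \<le> a" "0 \<le> c" "c \<le> 1"
  shows "continuous_on S (\<lambda>t. Lc_integrand a c ((cos t)^2))"
proof -
  have "continuous_on UNIV ((\<lambda>p. Lc_integrand a (fst p) ((cos (snd p))^2)) \<circ> Pair c)"
    using assms by (intro continuous_on_compose continuous_intros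
        continuous_on_subset[OF continuous_on_Lc_integrand_param]) auto
  then show ?thesis by (auto simp: o_def intro: continuous_on_subset)
qed

lemma Lint_eq_Lc:
  assumes a: "2 \<le> a" and c: "0 \<le> cos (2*\<theta>)"
  shows "Lint a \<theta> = Lc a (cos (2*\<theta>))"
proof -
  define c where "c = cos (2*\<theta>)"
  define f where "f t = Lc_integrand a c ((cos t)^2)" for t
  define g where "g x = arccos (- x)" for x :: real
  define g' where "g' x = 1 / sqrt (1 - x^2)" for x :: real
  have "((\<lambda>x. g' x *\<^sub>R f (g x)) has_integral integral {g (-1)..g 1} f) {-1..1}"
  proof (rule has_integral_substitution_strong[where s="{-1,1}" and c=0 and d=pi])
    show "continuous_on {0..pi} f"
      unfolding f_def by (rule continuous_on_Lc_integrand) (use a c in \<open>auto simp: c_def\<close>)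
    show "continuous_on {-1..1} g" unfolding g_def by (intro continuous_intros) auto
    fix x :: real assume "x \<in> {-1..1} - {-1,1}"
    then have "-1 < - x" "- x < 1" by auto
    from DERIV_chain2[OF DERIV_arccos[OF this] DERIV_minus[OF DERIV_ident]]
    show "(g has_real_derivative g' x) (at x within {-1..1})"
      unfolding g_def g'_def by (auto intro: has_field_derivative_at_within simp: divide_inverse)
  qed (auto simp: g_def arccos_lbound arccos_ubound)
  moreover have "g (-1) = 0" "g 1 = pi" by (auto simp: g_def)
  moreover have "g' x *\<^sub>R f (g x) =
     (2*a*(Cc a \<theta>)^2*x^2 - a*cos (2*\<theta>) + (Cc a \<theta>)^2*x^2 * sqrt (Pp a \<theta> x))
     / (sqrt ((1 - x^2) * Pp a \<theta> x) * (a + sqrt (Pp a \<theta> x)))" if "x \<in> {-1..1}" for x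
  proof -
    have "cos (g x) = - x" using that by (auto simp: g_def cos_arccos)
    moreover have num: "2*a*((1 - c^2)/(4*a^2))*x^2 - a*c + (1 - c^2)/(4*a^2)*x^2 * sqrt (Pc a c (x^2))
       = (1 - c^2)*x^2*(2*a + sqrt (Pc a c (x^2)))/(4*a^2) - a*c"
      using a by (simp add: field_simps power2_eq_square)
    ultimately show ?thesis
      unfolding Pp_eq_Pc f_def g'_def Lc_integrand_def Cc_squared real_sqrt_mult c_def[symmetric] num
      by (simp add: mult.assoc)
  qed
  ultimately have "Lint a \<theta> = integral {0..pi} f"
    unfolding Lint_def by (metis (no_types, lifting) integral_cong integral_unique)
  then show ?thesis unfolding Lc_def f_def c_def .
qed

lemma Pc_mono:
  assumes "0 \<le> c1" "c1 \<le> c2" "c2 \<le> 1" "0 \<le> y"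
  shows "Pc a c1 y \<le> Pc a c2 y"
proof -
  have "(1 - c2^2)*y^2 \<le> (1 - c1^2)*y^2"
    using assms by (intro mult_right_mono) (auto simp: power_mono)
  then have "(1 - c2^2)*y^2/(4*a^2) \<le> (1 - c1^2)*y^2/(4*a^2)"
    by (simp add: divide_right_mono)
  moreover have "c1*y \<le> c2*y" using assms by (simp add: mult_right_mono)
  ultimately show ?thesis unfolding Pc_def by linarith
qed

lemma Pc_div_strict_antimono:
  assumes "2 \<le> a" "0 < c1" "c1 < c2" "c2 \<le> 1" "0 \<le> y" "y \<le> 1"
  shows "c1 * Pc a c2 y < c2 * Pc a c1 y"
proof -
  define w where "w = y^2/(4*a^2)"
  have "y^2 \<le> 1" using assms by (simp add: power_le_one)
  moreover have "16 \<le> 4*a^2" using assms power_mono[of 2 a 2] by auto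
  ultimately have "w \<le> 1/16" unfolding w_def by (simp add: divide_simps)
  moreover have "c1*c2 \<le> 1" using assms by (simp add: mult_le_one)
  moreover have "0 \<le> w" by (simp add: w_def)
  ultimately have "w*(c1*c2) \<le> 1/16 * 1" using assms by (intro mult_mono) auto
  moreover have "4 \<le> a^2" using assms power_mono[of 2 a 2] by auto
  ultimately have "0 < (c2 - c1)*(a^2 - w - w*c1*c2)"
    using assms \<open>w \<le> 1/16\<close> by (intro mult_pos_pos) (auto simp: mult.assoc)
  moreover have "c2 * Pc a c1 y - c1 * Pc a c2 y = (c2 - c1)*(a^2 - w - w*c1*c2)"
    unfolding Pc_def w_def using assms by (simp add: field_simps power2_eq_square)
  ultimately show ?thesis by linarith
qed

lemma frac_2a_antimono:
  fixes a s1 s2 :: real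
  assumes "0 < a" "0 < s1" "s1 \<le> s2"
  shows "(2*a + s2)/(s2*(a + s2)) \<le> (2*a + s1)/(s1*(a + s1))"
proof -
  have "s2*(a + s2)*(2*a + s1) - s1*(a + s1)*(2*a + s2) = (s2 - s1)*(2*a^2 + 2*a*(s1 + s2) + s1 * s2)"
    by (simp add: algebra_simps power2_eq_square)
  moreover have "0 \<le> (s2 - s1)*(2*a^2 + 2*a*(s1 + s2) + s1 * s2)"
    using assms by (intro mult_nonneg_nonneg add_nonneg_nonneg) auto
  ultimately have "s1*(a + s1)*(2*a + s2) \<le> s2*(a + s2)*(2*a + s1)" by linarith
  then show ?thesis using assms by (simp add: divide_simps) (simp add: algebra_simps)
qed

lemma Lc_integrand_split:
  assumes "2 \<le> a" "0 \<le> c" "c \<le> 1" "0 \<le> y" "y \<le> 1"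
  defines "s \<equiv> sqrt (Pc a c y)"
  shows "Lc_integrand a c y = (1 - c^2)*y*((2*a + s)/(s*(a + s)))/(4*a^2) - a*c/(s*(a + s))"
proof -
  have "(p*q/r - b)/d = p*(q/d)/r - b/d" for p q r b d :: real
    by (cases "d = 0"; cases "r = 0") (simp_all add: field_simps)
  then show ?thesis unfolding Lc_integrand_def s_def[symmetric] .
qed

lemma Lc_integrand_strict_antimono:
  assumes a: "2 \<le> a" and c: "0 < c1" "c1 < c2" "c2 \<le> 1" and y: "0 \<le> y" "y \<le> 1"
  shows "Lc_integrand a c2 y < Lc_integrand a c1 y"
proof -
  define s1 where "s1 = sqrt (Pc a c1 y)"
  define s2 where "s2 = sqrt (Pc a c2 y)"
  have s: "1 \<le> s1" "1 \<le> s2" "s1\<^sup>2 = Pc a c1 y" "s2\<^sup>2 = Pc a c2 y"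
    using sqrt_Pc_bounds(3)[OF a _ _ y, of c1] sqrt_Pc_bounds(3)[OF a _ _ y, of c2] c
      Pc_pos[OF a _ _ y, of c1] Pc_pos[OF a _ _ y, of c2] by (auto simp: s1_def s2_def)
  have "s1 \<le> s2" unfolding s1_def s2_def using Pc_mono[of c1 c2 y a] c y by simp
  have P: "c1 * s2\<^sup>2 < c2 * s1\<^sup>2" using Pc_div_strict_antimono[OF a c y] s by simp
  have "c1\<^sup>2 * s2\<^sup>2 < c2\<^sup>2 * s1\<^sup>2"
  proof -
    have "c1\<^sup>2 * s2\<^sup>2 < c1 * (c2 * s1\<^sup>2)" using P c by (simp add: power2_eq_square)
    also have "\<dots> \<le> c2\<^sup>2 * s1\<^sup>2" using c by (simp add: power2_eq_square mult_right_mono)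
    finally show ?thesis .
  qed
  then have "c1 * s2 < c2 * s1"
    using c s by (metis power_mult_distrib power_less_imp_less_base mult_nonneg_nonneg
        order_less_le_trans zero_le_one less_imp_le)
  with P have "c1 * (s2*(a + s2)) < c2 * (s1*(a + s1))"
    using a by (simp add: algebra_simps power2_eq_square) (smt (verit) mult_strict_left_mono)
  then have second: "a*c1/(s1*(a + s1)) < a*c2/(s2*(a + s2))"
    using a s by (simp add: divide_simps mult.commute mult.left_commute)
  have "(2*a + s2)/(s2*(a + s2)) \<le> (2*a + s1)/(s1*(a + s1))"
    using frac_2a_antimono[of a s1 s2] a s \<open>s1 \<le> s2\<close> by simp
  moreover have "1 - c2\<^sup>2 \<le> 1 - c1\<^sup>2" "0 \<le> 1 - c2\<^sup>2" "0 \<le> (2*a + s2)/(s2*(a + s2))"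
    using c a s by (auto simp: power_mono power_le_one)
  ultimately have "(1 - c2\<^sup>2)*y*((2*a + s2)/(s2*(a + s2))) \<le> (1 - c1\<^sup>2)*y*((2*a + s1)/(s1*(a + s1)))"
    using y by (intro mult_mono mult_right_mono) auto
  then have first: "(1 - c2\<^sup>2)*y*((2*a + s2)/(s2*(a + s2)))/(4*a\<^sup>2)
      \<le> (1 - c1\<^sup>2)*y*((2*a + s1)/(s1*(a + s1)))/(4*a\<^sup>2)"
    by (rule divide_right_mono) simp
  show ?thesis
    using Lc_integrand_split[OF a _ _ y, of c1] Lc_integrand_split[OF a _ _ y, of c2] c first second
    unfolding s1_def s2_def by simp
qed

lemma Lc_strict_antimono:
  assumes "2 \<le> a" "0 < c1" "c1 < c2" "c2 \<le> 1"
  shows "Lc a c2 < Lc a c1"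
  unfolding Lc_def
proof (rule integral_less_real)
  show "continuous_on {0..pi} (\<lambda>t. Lc_integrand a c1 ((cos t)^2))"
    "continuous_on {0..pi} (\<lambda>t. Lc_integrand a c2 ((cos t)^2))"
    using continuous_on_Lc_integrand assms by auto
  show "{0<..<pi} \<noteq> {}" using pi_gt_zero by (auto intro!: exI[of _ "pi/2"])
  show "Lc_integrand a c2 ((cos t)^2) < Lc_integrand a c1 ((cos t)^2)" for t
    by (rule Lc_integrand_strict_antimono) (use assms cos_squared_bounds in auto)
qed

lemma Lc_half_neg:
  assumes a: "2 \<le> a"
  shows "Lc a (1/2) < 0"
proof -
  have "Lc_integrand a (1/2) y < 0" if y: "0 \<le> y" "y \<le> 1" for y
  proof -
    define s where "s = sqrt (Pc a (1/2) y)"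
    have s: "1 \<le> s" "s \<le> a + 1" using sqrt_Pc_bounds[OF a _ _ y] by (auto simp: s_def)
    have "(3/4)*y*(2*a + s) \<le> (3/4)*1*(3*a + 1)"
      using y s a by (intro mult_mono) auto
    also have "\<dots> < 2*a^3"
    proof -
      have "4*a \<le> a*a*a" using a power_mono[of 2 a 2] by (simp add: mult_right_mono power2_eq_square)
      moreover have "(3/4)*1*(3*a + 1) = 9/4*a + 3/4" by simp
      ultimately show ?thesis using a unfolding power3_eq_cube by linarith
    qed
    finally have "(1 - (1/2)^2)*y*(2*a + s)/(4*a^2) - a*(1/2) < 0"
      using a by (simp add: divide_simps power3_eq_cube power2_eq_square)
    moreover have "0 < s*(a + s)" using s a by auto
    ultimately show ?thesis unfolding Lc_integrand_def s_def[symmetric] by (simp add: divide_neg_pos)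
  qed
  then have "integral {0..pi} (\<lambda>t. Lc_integrand a (1/2) ((cos t)^2)) < integral {0..pi} (\<lambda>t. 0)"
    by (intro integral_less_real continuous_on_Lc_integrand continuous_intros)
       (use a cos_squared_bounds pi_gt_zero in \<open>auto intro!: exI[of _ "pi/2"]\<close>)
  then show ?thesis by (simp add: Lc_def)
qed

lemma Lc_zero_pos:
  assumes a: "2 \<le> a"
  shows "0 < Lc a 0"
proof -
  define f where "f t = Lc_integrand a 0 ((cos t)^2)" for t
  have "0 \<le> f t \<and> (t = 0 \<longrightarrow> 0 < f t)" for t
  proof -
    define s where "s = sqrt (Pc a 0 ((cos t)^2))"
    have "1 \<le> s" using sqrt_Pc_bounds(3)[OF a, of 0 "(cos t)^2"] cos_squared_bounds
      by (simp add: s_def)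
    moreover have "f t = (cos t)^2*(2*a + s)/(4*a^2)/(s*(a + s))"
      by (simp add: f_def Lc_integrand_def s_def)
    ultimately show ?thesis using a by auto
  qed
  then have nonneg: "0 \<le> f t" and "0 < f 0" for t by auto
  have cont: "continuous_on {0..pi} f"
    unfolding f_def by (rule continuous_on_Lc_integrand) (use a in auto)
  have "Lc a 0 \<noteq> 0"
  proof
    assume "Lc a 0 = 0"
    then have "(f has_integral 0) (cbox 0 pi)"
      using integrable_continuous_real[OF cont] unfolding Lc_def f_def[symmetric]
      by (metis cbox_interval has_integral_integrable_integral)
    then have "f 0 = 0"
      by (intro has_integral_0_cbox_imp_0[of 0 pi f])
         (use cont nonneg in \<open>auto simp: cbox_interval box_real\<close>)
    with \<open>0 < f 0\<close> show False by simp
  qed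
  moreover have "0 \<le> Lc a 0"
    unfolding Lc_def f_def[symmetric]
    by (rule integral_nonneg) (use cont nonneg integrable_continuous_real in auto)
  ultimately show ?thesis by linarith
qed

lemma continuous_on_Lc:
  assumes "2 \<le> a"
  shows "continuous_on {0..1} (Lc a)"
proof -
  have "continuous_on ({0..1} \<times> cbox 0 pi) (\<lambda>(c, t). Lc_integrand a c ((cos t)^2))"
    using continuous_on_subset[OF continuous_on_Lc_integrand_param[OF assms], of "{0..1} \<times> cbox 0 pi"]
    by (auto simp: split_beta)
  from integral_continuous_on_param[OF this] show ?thesis
    unfolding Lc_def by (simp add: cbox_interval)
qed

lemma Lc_unique_root:
  assumes a: "2 \<le> a"
  obtains c where "0 < c" "c < 1/2" "Lc a c = 0"
    "\<And>c'. 0 < c' \<Longrightarrow> c' \<le> 1 \<Longrightarrow> Lc a c' = 0 \<Longrightarrow> c' = c"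
proof -
  obtain c where c: "0 \<le> c" "c \<le> 1/2" "Lc a c = 0"
    using IVT2'[of "Lc a" "1/2" 0 0] Lc_half_neg[OF a] Lc_zero_pos[OF a]
      continuous_on_subset[OF continuous_on_Lc[OF a], of "{0..1/2}"] by force
  moreover have "c \<noteq> 0" using c(3) Lc_zero_pos[OF a] by auto
  moreover have "c \<noteq> 1/2" using c(3) Lc_half_neg[OF a] by (auto simp del: divide_const_simps)
  moreover have "c' = c" if c': "0 < c'" "c' \<le> 1" "Lc a c' = 0" for c'
  proof (rule ccontr)
    assume "c' \<noteq> c"
    then have "Lc a c' < Lc a c \<or> Lc a c < Lc a c'"
      using Lc_strict_antimono[OF a, of c c'] Lc_strict_antimono[OF a, of c' c] c c' \<open>c \<noteq> 0\<close>
      by (cases "c < c'") auto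
    then show False using c(3) c'(3) by simp
  qed
  ultimately show thesis by (intro that[of c]) auto
qed

lemma theta_tilde_bounds:
  assumes a: "2 \<le> a"
  shows "0 < theta_tilde a" "theta_tilde a < pi/4"
    and "0 < cos (2*theta_tilde a)" "cos (2*theta_tilde a) < 1/2"
    and "Lc a (cos (2*theta_tilde a)) = 0"
proof -
  obtain c where c: "0 < c" "c < 1/2" "Lc a c = 0"
    and unique: "\<And>c'. 0 < c' \<Longrightarrow> c' \<le> 1 \<Longrightarrow> Lc a c' = 0 \<Longrightarrow> c' = c"
    using Lc_unique_root[OF a] by blast
  define th where "th = arccos c / 2"
  have "cos (2*th) = c" using c by (simp add: th_def cos_arccos)
  have "0 < arccos c" "arccos c < pi/2"
    using arccos_less_arccos[of c 1] arccos_less_arccos[of 0 c] c by simp_all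
  then have th: "0 < th" "th < pi/4" by (simp_all add: th_def)
  have "theta_tilde a = th"
    unfolding theta_tilde_def
  proof (rule the_equality)
    have "theta_plus a = pi/2" using a by (simp add: theta_plus_def)
    then show "0 < th \<and> th < theta_plus a \<and> th < pi/4 \<and> Lint a th = 0"
      using th Lint_eq_Lc[OF a, of th] \<open>cos (2*th) = c\<close> c by auto
  next
    fix \<theta> assume \<theta>: "0 < \<theta> \<and> \<theta> < theta_plus a \<and> \<theta> < pi/4 \<and> Lint a \<theta> = 0"
    then have "0 < cos (2*\<theta>)" by (intro cos_gt_zero) auto
    moreover have "cos (2*\<theta>) = c"
      by (rule unique) (use \<theta> \<open>0 < cos (2*\<theta>)\<close> Lint_eq_Lc[OF a, of \<theta>] in auto)
    moreover have "arccos (cos (2*\<theta>)) = 2*\<theta>" using \<theta> by (intro arccos_cos) auto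
    ultimately show "\<theta> = th" by (simp add: th_def)
  qed
  then show "0 < theta_tilde a" "theta_tilde a < pi/4"
    "0 < cos (2*theta_tilde a)" "cos (2*theta_tilde a) < 1/2" "Lc a (cos (2*theta_tilde a)) = 0"
    using th \<open>cos (2*th) = c\<close> c by auto
qed

lemma Lc_integrand_abs_bound:
  assumes a: "2 \<le> a" and c: "0 \<le> c" "c \<le> 1" and y: "0 \<le> y" "y \<le> 1"
  shows "\<bar>Lc_integrand a c y\<bar> \<le> 2 / a"
proof -
  define s where "s = sqrt (Pc a c y)"
  have s: "a - 1 \<le> s" "s \<le> a + 1" using sqrt_Pc_bounds(1,2)[OF a c y] by (auto simp: s_def)
  define T where "T = (1 - c^2)*y*(2*a + s)/(4*a^2)"
  have "0 \<le> T" unfolding T_def using c y s a by (intro divide_nonneg_pos mult_nonneg_nonneg) (auto simp: power_le_one)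
  moreover have "T \<le> a"
  proof -
    have "(1 - c^2)*y*(2*a + s) \<le> 1*1*(3*a + 1)"
      using c y s a by (intro mult_mono) (auto simp: power_le_one)
    also have "\<dots> \<le> a*(4*a^2)"
    proof -
      have "a*16 \<le> a*(4*a^2)" using a power_mono[of 2 a 2] by (intro mult_left_mono) auto
      then show ?thesis using a unfolding mult.left_neutral by linarith
    qed
    finally show ?thesis unfolding T_def using a by (simp add: pos_divide_le_eq)
  qed
  moreover have "0 \<le> a*c" "a*c \<le> a" using a c by (auto simp: mult_le_cancel_left1)
  ultimately have "\<bar>T - a*c\<bar> \<le> a" by linarith
  moreover have "a^2/2 \<le> s*(a + s)"
    using mult_mono[of "a/2" s a "a + s"] s a by (simp add: power2_eq_square)
  moreover have "0 < a^2/2" using a by simp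
  ultimately have "\<bar>T - a*c\<bar> / (s*(a + s)) \<le> a / (a^2/2)" by (intro frac_le) auto
  also have "\<dots> = 2 / a" using a by (simp add: power2_eq_square)
  finally have "\<bar>T - a*c\<bar> / (s*(a + s)) \<le> 2 / a" .
  moreover have "0 < s*(a + s)" using s a by simp
  ultimately show ?thesis unfolding Lc_integrand_def T_def s_def[symmetric] by (simp add: abs_divide)
qed

section \<open>The exponent on the slice \<open>x\<^sub>2 = 0\<close>\<close>

definition c_tilde :: "real \<Rightarrow> real" where
  "c_tilde a = cos (2 * theta_tilde a)"

definition sqrtP :: "real \<Rightarrow> real \<Rightarrow> real" where
  "sqrtP a t = sqrt (Pp a (theta_tilde a) (cos t))"

definition rho :: "real \<Rightarrow> real \<Rightarrow> real" where
  "rho a t = Lc_integrand a (c_tilde a) ((cos t)^2) / Ct a"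

text \<open>On the slice \<open>x\<^sub>2 = 0\<close> one has \<open>v = G u / C\<close>, so \<open>A = A_slice \<alpha> u\<close>.\<close>

definition A_slice :: "real \<Rightarrow> real \<Rightarrow> real" where
  "A_slice a u = a * (G a u / Ct a) + beta a u"

lemma Ct_squared: "(Ct a)^2 = (1 - (c_tilde a)^2)/(4*a^2)"
  unfolding Ct_def c_tilde_def by (rule Cc_squared)

lemma sqrtP_eq: "sqrtP a t = sqrt (Pc a (c_tilde a) ((cos t)^2))"
  by (simp add: sqrtP_def c_tilde_def Pp_eq_Pc)

lemma rho_periodic: "rho a (t + pi) = rho a t"
  by (simp add: rho_def)

context
  fixes a :: real
  assumes a: "2 \<le> a"
begin

lemma c_tilde_bounds: "0 < c_tilde a" "c_tilde a < 1/2"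
  using theta_tilde_bounds[OF a] by (simp_all add: c_tilde_def)

lemma Ct_bounds: "0 < Ct a" "1/(4*a) \<le> Ct a" "Ct a \<le> 1/(2*a)"
proof -
  define s where "s = sin (2 * theta_tilde a)"
  have "0 < s" unfolding s_def using theta_tilde_bounds(1,2)[OF a] by (intro sin_gt_zero) auto
  moreover have "s^2 = 1 - (c_tilde a)^2" by (simp add: s_def c_tilde_def sin_squared_eq)
  moreover have "(c_tilde a)^2 \<le> (1/2)^2" using c_tilde_bounds by (intro power_mono) auto
  ultimately have "(1/2)^2 \<le> s^2" by (simp add: power2_eq_square)
  from power2_le_imp_le[OF this less_imp_le[OF \<open>0 < s\<close>]] have "1/2 \<le> s" .
  moreover have "s \<le> 1" by (simp add: s_def)
  moreover have Ct: "Ct a = s / (2*a)" by (simp add: Ct_def Cc_def s_def)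
  ultimately show "1/(4*a) \<le> Ct a" "Ct a \<le> 1/(2*a)"
    using a by (simp_all add: field_simps)
  show "0 < Ct a" using Ct \<open>0 < s\<close> a by simp
qed

lemma sqrtP_bounds: "1 \<le> sqrtP a t" "a - 1 \<le> sqrtP a t" "sqrtP a t \<le> a + 1"
  unfolding sqrtP_eq using sqrt_Pc_bounds[OF a, of "c_tilde a" "(cos t)^2"] c_tilde_bounds
    cos_squared_bounds by auto

lemma continuous_on_sqrtP: "continuous_on UNIV (sqrtP a)"
  unfolding sqrtP_def Pp_def by (intro continuous_intros)

lemma phi_solves: "phi a 0 = 0" "(phi a has_real_derivative - sqrtP a (phi a u)) (at u)"
proof -
  have pos: "0 < sqrtP a t" for t using sqrtP_bounds(1)[of t] by linarith
  obtain \<phi> where \<phi>: "\<phi> 0 = 0" "\<And>u. (\<phi> has_real_derivative - sqrtP a (\<phi> u)) (at u)"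
    using autonomous_ode_solution_exists[OF continuous_on_sqrtP pos sqrtP_bounds(3)] by blast
  have sq: "(sqrtP a t)^2 = Pp a (theta_tilde a) (cos t)" for t
    using pos[of t] by (simp add: sqrtP_def)
  have "phi a = \<phi>"
    unfolding phi_def
  proof (rule the_equality)
    show "\<exists>f'. \<phi> 0 = 0 \<and> f' 0 \<le> 0 \<and> (\<forall>u. (\<phi> has_real_derivative f' u) (at u)) \<and>
        (\<forall>u. (f' u)^2 = Pp a (theta_tilde a) (cos (\<phi> u)))"
      using \<phi> pos[of "\<phi> 0"] sq by (intro exI[of _ "\<lambda>u. - sqrtP a (\<phi> u)"]) auto
  next
    fix f assume "\<exists>f'. f 0 = 0 \<and> f' 0 \<le> 0 \<and> (\<forall>u. (f has_real_derivative f' u) (at u)) \<and>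
        (\<forall>u. (f' u)^2 = Pp a (theta_tilde a) (cos (f u)))"
    then obtain f' where f: "f 0 = 0" "f' 0 \<le> 0" "\<And>u. (f has_real_derivative f' u) (at u)"
      and f'_sq: "\<And>u. (f' u)^2 = (sqrtP a (f u))^2" using sq by auto
    have "(f has_real_derivative - sqrtP a (f u)) (at u)" for u
      using f(3)[of u] derivative_eq_neg_of_square_eq[OF f(3) f'_sq pos f(2)] by simp
    then show "f = \<phi>"
      by (rule autonomous_ode_solution_unique[OF continuous_on_sqrtP pos _ \<phi>(2)]) (simp add: f(1) \<phi>(1))
  qed
  with \<phi> show "phi a 0 = 0" "(phi a has_real_derivative - sqrtP a (phi a u)) (at u)" by auto
qed

lemma dphi_eq: "dphi a u = - sqrtP a (phi a u)"
  unfolding dphi_def by (rule DERIV_imp_deriv[OF phi_solves(2)])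

lemma continuous_on_phi: "continuous_on UNIV (phi a)"
  using phi_solves(2) by (intro continuous_at_imp_continuous_on) (auto intro: DERIV_isCont)

lemma dG_eq: "dG a u = ((Ct a)^2 * (cos (phi a u))^2 - c_tilde a) / (a + sqrtP a (phi a u))"
  unfolding dG_def dphi_eq c_tilde_def by simp

lemma beta_solves: "beta a 0 = 0" "(beta a has_real_derivative Ct a * (cos (phi a u))^2) (at u)"
proof -
  have "continuous_on UNIV (\<lambda>u. Ct a * (cos (phi a u))^2)"
    by (intro continuous_intros continuous_on_phi)
  from prim_zero[OF this] has_real_derivative_prim[OF this]
  show "beta a 0 = 0" "(beta a has_real_derivative Ct a * (cos (phi a u))^2) (at u)"
    unfolding beta_def by auto
qed

lemma G_solves: "G a 0 = 0" "(G a has_real_derivative dG a u) (at u)"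
proof -
  have "a + sqrtP a (phi a u) \<noteq> 0" for u using sqrtP_bounds(1)[of "phi a u"] a by linarith
  moreover have "continuous_on UNIV (\<lambda>u. sqrtP a (phi a u))"
    by (rule continuous_on_compose2[OF continuous_on_sqrtP continuous_on_phi]) auto
  ultimately have "continuous_on UNIV (dG a)"
    unfolding dG_eq[abs_def] by (intro continuous_intros continuous_on_phi) auto
  from prim_zero[OF this] has_real_derivative_prim[OF this]
  show "G a 0 = 0" "(G a has_real_derivative dG a u) (at u)"
    unfolding G_def by auto
qed

lemma dG_bound: "\<bar>dG a u\<bar> \<le> 1/a"
proof -
  have "1/(2*a) \<le> 1" using a by simp
  then have "(Ct a)^2 \<le> 1"
    using Ct_bounds by (intro power_le_one) auto
  then have "(Ct a)^2 * (cos (phi a u))^2 \<le> 1"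
    using cos_squared_bounds[of "phi a u"] by (simp add: mult_le_one)
  then have "\<bar>(Ct a)^2 * (cos (phi a u))^2 - c_tilde a\<bar> \<le> 1"
    using c_tilde_bounds zero_le_power2[of "Ct a * cos (phi a u)"]
    unfolding power_mult_distrib abs_le_iff by linarith
  moreover have "a \<le> a + sqrtP a (phi a u)" using sqrtP_bounds(1)[of "phi a u"] by simp
  ultimately show ?thesis unfolding dG_eq abs_divide using a by (intro frac_le) auto
qed

lemma continuous_on_rho: "continuous_on UNIV (rho a)"
  unfolding rho_def using c_tilde_bounds Ct_bounds(1)
  by (intro continuous_intros continuous_on_Lc_integrand[OF a]) auto

lemma rho_bound: "\<bar>rho a t\<bar> \<le> 8"
proof -
  have "\<bar>Lc_integrand a (c_tilde a) ((cos t)^2)\<bar> \<le> 2/a"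
    by (rule Lc_integrand_abs_bound[OF a]) (use c_tilde_bounds cos_squared_bounds in auto)
  then have "\<bar>rho a t\<bar> \<le> (2/a) / (1/(4*a))"
    unfolding rho_def abs_divide using Ct_bounds a by (intro frac_le) auto
  also have "\<dots> = 8" using a by simp
  finally show ?thesis .
qed

lemma sqrtP_mult_rho:
  "sqrtP a t * rho a t
     = a * (((Ct a)^2 * (cos t)^2 - c_tilde a) / (a + sqrtP a t) / Ct a) + Ct a * (cos t)^2"
proof -
  have c: "1 - (c_tilde a)^2 = 4*a^2*(Ct a)^2" using Ct_squared[of a] a by (simp add: field_simps)
  have identity: "S * ((4*a^2*C^2*y*(a + T)/(4*a^2) - a*c)/(S*T)/C) = a*((C^2*y - c)/T/C) + C*y"
    if "S \<noteq> 0" "T \<noteq> 0" "C \<noteq> 0" "a \<noteq> 0" for S T C y c :: real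
    using that by (simp add: field_simps power2_eq_square)
  have nonzero: "sqrtP a t \<noteq> 0" "a + sqrtP a t \<noteq> 0" "Ct a \<noteq> 0" "a \<noteq> 0"
    using sqrtP_bounds(1)[of t] Ct_bounds(1) a by auto
  have two_a: "2*a + sqrtP a t = a + (a + sqrtP a t)" by simp
  show ?thesis
    unfolding rho_def Lc_integrand_def sqrtP_eq[symmetric] c two_a
    by (rule identity[OF nonzero])
qed

lemma prim_rho_periodic: "prim (rho a) (t + pi) = prim (rho a) t"
proof (rule primitive_periodic[where f="rho a" and p=pi])
  show "(prim (rho a) has_real_derivative rho a t) (at t)" for t
    by (rule has_real_derivative_prim[OF continuous_on_rho])
  show "rho a (t + pi) = rho a t" for t by (rule rho_periodic)
  have "(prim (rho a) has_vector_derivative rho a x) (at x within {0..pi})" for x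
    using has_field_derivative_at_within[OF has_real_derivative_prim[OF continuous_on_rho]]
    unfolding has_real_derivative_iff_has_vector_derivative .
  then have "(rho a has_integral prim (rho a) pi - prim (rho a) 0) {0..pi}"
    by (intro fundamental_theorem_of_calculus) auto
  moreover have "(rho a has_integral Lc a (c_tilde a) / Ct a) {0..pi}"
    unfolding rho_def[abs_def] Lc_def using c_tilde_bounds
    by (intro has_integral_divide integrable_integral integrable_continuous_real
        continuous_on_Lc_integrand[OF a]) auto
  moreover have "Lc a (c_tilde a) = 0" using theta_tilde_bounds(5)[OF a] by (simp add: c_tilde_def)
  ultimately show "prim (rho a) pi = prim (rho a) 0"
    by (metis has_integral_unique div_0 right_minus_eq)
qed

lemma A_slice_eq: "A_slice a u = - prim (rho a) (phi a u)"
proof -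
  have "((\<lambda>u. A_slice a u + prim (rho a) (phi a u)) has_real_derivative 0) (at x)" for x
  proof -
    have "((\<lambda>u. A_slice a u + prim (rho a) (phi a u)) has_real_derivative
        a * (dG a x / Ct a) + Ct a * (cos (phi a x))^2 + rho a (phi a x) * - sqrtP a (phi a x)) (at x)"
      unfolding A_slice_def
      by (intro DERIV_add DERIV_cmult DERIV_cdivide G_solves(2) beta_solves(2)
          DERIV_chain2[OF has_real_derivative_prim[OF continuous_on_rho] phi_solves(2)])
    moreover have "sqrtP a (phi a x) * rho a (phi a x) = a * (dG a x / Ct a) + Ct a * (cos (phi a x))^2"
      by (simp add: sqrtP_mult_rho dG_eq)
    ultimately show ?thesis by (simp add: algebra_simps)
  qed
  from DERIV_isconst_all[of "\<lambda>u. A_slice a u + prim (rho a) (phi a u)" u 0] this show ?thesis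
    by (simp add: A_slice_def G_solves(1) beta_solves(1) phi_solves(1)
        prim_zero[OF continuous_on_rho])
qed

lemma A_slice_bound: "\<bar>A_slice a u\<bar> \<le> 8*pi"
  using periodic_abs_diff_le[where F="prim (rho a)" and f="rho a" and B=8 and p=pi,
      OF has_real_derivative_prim[OF continuous_on_rho] rho_bound prim_rho_periodic pi_gt_zero]
  by (simp add: A_slice_eq prim_zero[OF continuous_on_rho])

end

text \<open>The four summands of \<open>x\<^sub>1\<close> and \<open>x\<^sub>3\<close> (with \<open>x\<^sub>2 = 0\<close>) each carry a factor of order
  \<open>\<alpha>\<^sup>-\<^sup>2\<close>, because \<open>G'\<close> and \<open>C\<close> are of order \<open>\<alpha>\<^sup>-\<^sup>1\<close>.\<close>

lemma slice_coordinates_bound: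
  fixes a C g p A B :: real
  assumes a: "2 \<le> a" and C: "0 \<le> C" "C \<le> 1/(2*a)" and g: "\<bar>g\<bar> \<le> 1/a" and A: "\<bar>A\<bar> \<le> B"
  shows "\<bar>g/a * cos p * sinh A - C/a * sin p * cosh A\<bar>
       + \<bar>C/a * (g/a - 1) * cos p * cosh A - 1/a * (C^2/a + g) * sin p * sinh A\<bar> \<le> 5 * exp B / a^2"
proof -
  define E where "E = exp B"
  note hyp = abs_sinh_cosh_le_exp[OF A, folded E_def]
  have trig: "\<bar>cos p\<bar> \<le> 1" "\<bar>sin p\<bar> \<le> 1" by auto
  have "4 \<le> a^2" using a power_mono[of 2 a 2] by auto
  have ga: "\<bar>g/a\<bar> \<le> 1/a^2"
    using divide_right_mono[OF g, of a] a by (simp add: abs_divide power2_eq_square)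
  have Ca: "\<bar>C/a\<bar> \<le> 1/(2*a^2)"
    using divide_right_mono[OF C(2), of a] a C(1) by (simp add: abs_divide power2_eq_square)
  have "1/a^2 \<le> 1/4" using \<open>4 \<le> a^2\<close> by (simp add: divide_simps)
  then have "\<bar>g/a - 1\<bar> \<le> 2" using ga abs_triangle_ineq4[of "g/a" 1] by simp
  then have t3: "\<bar>C/a * (g/a - 1)\<bar> \<le> 1/(2*a^2) * 2"
    unfolding abs_mult using Ca by (intro mult_mono) auto
  have "1/(2*a) \<le> 1" using a by simp
  then have "C \<le> 1" using C by linarith
  then have "\<bar>C^2/a\<bar> \<le> 1/a"
    using a power_le_one[of C 2] C(1) divide_right_mono[of "C^2" 1 a] by simp
  then have "\<bar>C^2/a + g\<bar> \<le> 2/a"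
    using g abs_triangle_ineq[of "C^2/a" g] by simp
  then have t4: "\<bar>1/a * (C^2/a + g)\<bar> \<le> 1/a * (2/a)"
    unfolding abs_mult using a by (intro mult_mono) auto
  have "\<bar>g/a * cos p * sinh A - C/a * sin p * cosh A\<bar>
      + \<bar>C/a * (g/a - 1) * cos p * cosh A - 1/a * (C^2/a + g) * sin p * sinh A\<bar>
      \<le> (1/a^2 * 1 * E + 1/(2*a^2) * 1 * E) + (1/(2*a^2) * 2 * 1 * E + 1/a * (2/a) * 1 * E)"
    by (intro add_mono order_trans[OF abs_triangle_ineq4]
        add_mono[OF abs_mult3_le[OF ga trig(1) hyp(1)] abs_mult3_le[OF Ca trig(2) hyp(2)]]
        add_mono[OF abs_mult3_le[OF t3 trig(1) hyp(2)] abs_mult3_le[OF t4 trig(2) hyp(1)]])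
  also have "\<dots> = 9/2 * E / a^2"
    using a by (simp add: field_simps power2_eq_square)
  also have "\<dots> \<le> 5 * E / a^2" by (rule divide_right_mono) (auto simp: E_def)
  finally show ?thesis unfolding E_def .
qed

lemma slice_point_bound:
  assumes a: "2 \<le> a" and "(x1, 0, x3) \<in> Ccal a"
  shows "\<bar>x1\<bar> + \<bar>x3\<bar> \<le> 5 * exp (8*pi) / a^2"
proof -
  obtain u v where uv: "X a (u, v) = (x1, 0, x3)" using assms(2) unfolding Ccal_def by auto
  define A where "A = a * v + beta a u"
  have x2: "Ct a * v - G a u = 0" and x1: "x1 = dG a u/a * cos (phi a u) * sinh A - Ct a/a * sin (phi a u) * cosh A"
    and x3: "x3 = Ct a/a * (dG a u/a - 1) * cos (phi a u) * cosh A
       - 1/a * ((Ct a)^2/a + dG a u) * sin (phi a u) * sinh A"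
    using uv unfolding X_def Let_def A_def by auto
  have "A = A_slice a u"
    using x2 Ct_bounds(1)[OF a] unfolding A_def A_slice_def by (simp add: field_simps)
  then have "\<bar>A\<bar> \<le> 8*pi" using A_slice_bound[OF a] by simp
  from slice_coordinates_bound[OF a less_imp_le[OF Ct_bounds(1)[OF a]] Ct_bounds(3)[OF a]
      dG_bound[OF a] this]
  show ?thesis unfolding x1 x3 .
qed

lemma Sup_slice_bounds:
  assumes "2 \<le> a"
  defines "S \<equiv> {\<bar>x1\<bar> + \<bar>x3\<bar> | x1 x3. (x1, 0, x3) \<in> Ccal a}"
  shows "bdd_above S" "0 \<le> Sup S" "Sup S \<le> 5 * exp (8*pi) / a^2"
proof -
  have bound: "z \<le> 5 * exp (8*pi) / a^2" if "z \<in> S" for z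
    using that slice_point_bound[OF assms(1)] unfolding S_def by auto
  then show "bdd_above S" by (auto simp: bdd_above_def)
  have "X a (0, 0) = (fst (X a (0, 0)), 0, snd (snd (X a (0, 0))))"
    by (simp add: X_def Let_def G_solves(1)[OF assms(1)])
  then have origin: "\<bar>fst (X a (0, 0))\<bar> + \<bar>snd (snd (X a (0, 0)))\<bar> \<in> S"
    unfolding S_def Ccal_def by (metis (mono_tags, lifting) mem_Collect_eq rangeI)
  from cSup_upper[OF this \<open>bdd_above S\<close>] show "0 \<le> Sup S" by linarith
  from origin bound show "Sup S \<le> 5 * exp (8*pi) / a^2" by (intro cSup_least) auto
qed

theorem lemma6p2:
  shows "(\<forall>\<^sub>F \<alpha> in at_top. bdd_above {\<bar>x1\<bar> + \<bar>x3\<bar> | x1 x3. (x1, 0, x3) \<in> Ccal \<alpha>}) \<and>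
         ((\<lambda>\<alpha>. Sup {\<bar>x1\<bar> + \<bar>x3\<bar> | x1 x3. (x1, 0, x3) \<in> Ccal \<alpha>}) \<longlongrightarrow> 0) at_top"
    (is "(\<forall>\<^sub>F \<alpha> in at_top. bdd_above (?S \<alpha>)) \<and> _")
proof -
  have "\<forall>\<^sub>F \<alpha> in at_top. bdd_above (?S \<alpha>) \<and> 0 \<le> Sup (?S \<alpha>) \<and> Sup (?S \<alpha>) \<le> 5 * exp (8*pi) / \<alpha>^2"
    using eventually_ge_at_top[of 2] by (rule eventually_mono) (simp add: Sup_slice_bounds)
  then have bdd: "\<forall>\<^sub>F \<alpha> in at_top. bdd_above (?S \<alpha>)"
    and lower: "\<forall>\<^sub>F \<alpha> in at_top. 0 \<le> Sup (?S \<alpha>)"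
    and upper: "\<forall>\<^sub>F \<alpha> in at_top. Sup (?S \<alpha>) \<le> 5 * exp (8*pi) / \<alpha>^2"
    by (simp_all add: eventually_conj_iff)
  have "((\<lambda>\<alpha>::real. 5 * exp (8*pi) / \<alpha>^2) \<longlongrightarrow> 0) at_top" by real_asymp
  from tendsto_sandwich[OF lower upper tendsto_const this] bdd show ?thesis by simp
qed

end
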